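(* Let $\mathcal{S}$ be a relational structure admitting an injective unary FA-presentation $(a^*,\phi)$, and let $R$ be a binary relation in the signature of $\mathcal{S}$. Let $Q$ be the equivalence relation generated by $R$. Then $\Lambda(Q,\phi)=\{(u,v)\in a^*\times a^*:(u\phi,v\phi)\in Q\}$ is regular. Hence $\mathcal{S}$ augmented by $Q$ is also unary FA-presentable.
   Context: For words $w_1,\dots,w_r$ over a finite alphabet $A$, $\mathrm{conv}(w_1,\dots,w_r)$ is the word over $(A\cup\{\$\})^r$ (with $\$\notin A$) whose $j$-th letter is the tuple of $j$-th letters of the $w_i$, shorter words being padded at the end with $\$$. A relation $X\subseteq (A^* )^r$ is regular if $\{\mathrm{conv}(w_1,\dots,w_r):(w_1,\dots,w_r)\in X\}$ is a regular language. An FA-presentation of a relational structure $\mathcal{S}=(S,R_1,\dots,R_n)$ is a pair $(L,\phi)$ with $L$ a regular language over a finite alphabet and $\phi:L\to S$ surjective such that for every relation $R\in\{=,R_1,\dots,R_n\}$ of arity $r$ the relation $\Lambda(R,\phi)=\{(w_1,\dots,w_r)\in L^r : R(w_1\phi,\dots,w_r\phi)\}$ is regular. It is unary if $L$ is over a one-letter alphabet $\{a\}$; a structure is unary FA-presentable if it admits one. An injective unary FA-presentation $(a^*,\phi)$ is one with $L=a^*$ and $\phi$ injective. *)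

theory Defs
  imports Main
begin

text \<open>A language is regular iff it is
accepted by a deterministic finite automaton (finitely many states, encoded as
naturals; the transition function is total, a dead state handles letters outside
the intended alphabet).\<close>

definition regular :: "'a list set \<Rightarrow> bool" where
  "regular L \<longleftrightarrow>
     (\<exists>(Q::nat set) q0 (\<delta>::nat \<Rightarrow> 'a \<Rightarrow> nat) F.
        finite Q \<and> q0 \<in> Q \<and> (\<forall>q\<in>Q. \<forall>x. \<delta> q x \<in> Q) \<and> F \<subseteq> Q \<and>
        L = {w. foldl \<delta> q0 w \<in> F})"

text \<open>Convolution of words; the padding symbol \$ is None. The j-th letter is the
tuple (list) of j-th letters.\<close>

definition conv :: "'a list list \<Rightarrow> 'a option list list" where
  "conv ws = map (\<lambda>j. map (\<lambda>w. if j < length w then Some (w ! j) else None) ws)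
                 [0..<foldr max (map length ws) 0]"

definition regular_rel :: "'a list list set \<Rightarrow> bool" where
  "regular_rel X \<longleftrightarrow> regular (conv ` X)"

definition relational_structure :: "'s set \<Rightarrow> (nat \<times> 's list set) list \<Rightarrow> bool" where
  "relational_structure S rels \<longleftrightarrow>
     (\<forall>(r, R) \<in> set rels. \<forall>xs \<in> R. length xs = r \<and> set xs \<subseteq> S)"

definition Lambda :: "'b list set \<Rightarrow> ('b list \<Rightarrow> 's) \<Rightarrow> nat \<Rightarrow> 's list set \<Rightarrow> 'b list list set" where
  "Lambda L \<phi> r R = {ws. length ws = r \<and> set ws \<subseteq> L \<and> map \<phi> ws \<in> R}"

definition eq_rel :: "'s set \<Rightarrow> 's list set" where
  "eq_rel S = {[x, x] | x. x \<in> S}"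

definition FA_presentation ::
  "'b list set \<Rightarrow> ('b list \<Rightarrow> 's) \<Rightarrow> 's set \<Rightarrow> (nat \<times> 's list set) list \<Rightarrow> bool" where
  "FA_presentation L \<phi> S rels \<longleftrightarrow>
     (\<exists>A. finite A \<and> L \<subseteq> lists A) \<and> regular L \<and> \<phi> ` L = S \<and>
     regular_rel (Lambda L \<phi> 2 (eq_rel S)) \<and>
     (\<forall>(r, R) \<in> set rels. regular_rel (Lambda L \<phi> r R))"

text \<open>Unary: the alphabet is the one-letter alphabet {a}, modelled by type unit.\<close>

definition unary_FA_presentable :: "'s set \<Rightarrow> (nat \<times> 's list set) list \<Rightarrow> bool" where
  "unary_FA_presentable S rels \<longleftrightarrow> (\<exists>(L::unit list set) \<phi>. FA_presentation L \<phi> S rels)"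

end

theory Submission
  imports Defs "HOL-Library.FuncSet"
begin

text \<open>Over a one-letter alphabet a pair of words is a pair of numbers \<open>(m, n)\<close>, and a
  binary relation on \<open>\<nat>\<close> is regular exactly when it is eventually periodic: beyond a
  threshold it is invariant under adding a period to both coordinates, and under adding
  it to the larger coordinate once that exceeds the smaller one by the threshold. Indeed an
  automaton reads the convolution as \<open>min m n\<close> diagonal letters followed by \<open>|m - n|\<close>
  letters of a single kind, and each letter acts eventually periodically on the finite set
  of states.

  As \<open>\<phi>\<close> is injective, \<open>Q\<close> becomes the equivalence closure of such a relation, so it
  remains to see that the reflexive transitive closure of a symmetric eventually periodic
  relation is eventually periodic. Above the threshold the graph is invariant under
  translation by the period, so each of its components is either finite, with uniformly
  bounded diameter, or contains \<open>u + c p\<close> along with each of its vertices \<open>u\<close>, for one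
  \<open>c > 0\<close> serving all components. Paths that dip below the threshold pass through one of
  finitely many low vertices, and which of them can be entered from \<open>u\<close> is again periodic
  in \<open>u\<close>.\<close>

lemma regularI_dfa:
  fixes Q :: "'q set" and q0 :: 'q and \<delta> :: "'q \<Rightarrow> 'a \<Rightarrow> 'q"
  assumes "finite Q" "q0 \<in> Q" "\<forall>q\<in>Q. \<forall>x. \<delta> q x \<in> Q" "L = {w. foldl \<delta> q0 w \<in> F}"
  shows "regular L"
proof -
  obtain f :: "'q \<Rightarrow> nat" and n where f: "f ` Q = {i. i < n}" "inj_on f Q"
    using finite_imp_inj_to_nat_seg[OF assms(1)] by blast
  define g where "g = inv_into Q f"
  define \<delta>' where "\<delta>' = (\<lambda>q x. f (\<delta> (g q) x))"
  have gf: "g (f q) = q" if "q \<in> Q" for q using f(2) that by (simp add: g_def)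
  have foldl_encode: "foldl \<delta>' (f q) w = f (foldl \<delta> q w)" if "q \<in> Q" for q w
    using that
  proof (induction w arbitrary: q)
    case (Cons x w)
    then show ?case using gf assms(3) by (simp add: \<delta>'_def)
  qed simp
  have reachable: "foldl \<delta> q0 w \<in> Q" for w
    by (induction w rule: rev_induct) (use assms(2,3) in simp_all)
  have "L = {w. foldl \<delta>' (f q0) w \<in> f ` (F \<inter> Q)}"
  proof -
    have "foldl \<delta> q0 w \<in> F \<longleftrightarrow> f (foldl \<delta> q0 w) \<in> f ` (F \<inter> Q)" for w
      using reachable[of w] f(2) by (auto simp: inj_on_image_mem_iff)
    then show ?thesis using assms(4) foldl_encode[OF assms(2)] by simp
  qed
  moreover have "\<forall>q\<in>f ` Q. \<forall>x. \<delta>' q x \<in> f ` Q"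
    using assms(3) gf by (auto simp: \<delta>'_def)
  ultimately show ?thesis
    unfolding regular_def using assms(1,2) by (intro exI[of _ "f ` Q"]) blast
qed

lemma foldl_replicate: "foldl \<delta> q (replicate k x) = ((\<lambda>q. \<delta> q x) ^^ k) q"
  by (induction k arbitrary: q) (simp_all add: funpow_Suc_right del: funpow.simps)

lemma funpow_closed: "q \<in> Q \<Longrightarrow> \<forall>q\<in>Q. g q \<in> Q \<Longrightarrow> (g ^^ n) q \<in> Q"
  by (induction n) auto

lemma shift_invariant_mult:
  fixes p :: nat
  assumes "\<And>x. P x \<Longrightarrow> P (x + p) \<and> f (x + p) = f x" "P x"
  shows "f (x + k * p) = f x"
proof -
  have "P (x + k * p) \<and> f (x + k * p) = f x"
  proof (induction k)
    case (Suc k)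
    have "x + Suc k * p = (x + k * p) + p" by simp
    then show ?case using assms(1) Suc by metis
  qed (simp add: assms(2))
  then show ?thesis ..
qed

lemma funpow_eventually_periodic:
  assumes "finite Q" "\<forall>q\<in>Q. g q \<in> Q"
  obtains K p where "0 < p" "\<And>q n k. q \<in> Q \<Longrightarrow> K \<le> n \<Longrightarrow> (g ^^ (n + k * p)) q = (g ^^ n) q"
proof -
  define h where "h = (\<lambda>n. restrict (g ^^ n) Q)"
  have "range h \<subseteq> Q \<rightarrow>\<^sub>E Q"
    unfolding h_def using funpow_closed[OF _ assms(2)] by (auto simp: restrict_PiE_iff)
  then have "finite (range h)"
    using finite_PiE[OF assms(1) assms(1)] by (rule finite_subset)
  then obtain i j where ij: "i < j" "h i = h j"
    using finite_imageD[of h UNIV] unfolding inj_def by (metis infinite_UNIV_nat linorder_neqE_nat)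
  have cycle: "(g ^^ i) q = (g ^^ j) q" if "q \<in> Q" for q
    using fun_cong[OF ij(2), of q] that by (simp add: h_def)
  have step: "i \<le> n + (j - i) \<and> (g ^^ (n + (j - i))) q = (g ^^ n) q" if "q \<in> Q" "i \<le> n" for q n
  proof -
    have "(g ^^ (n + (j - i))) q = (g ^^ (n - i)) ((g ^^ j) q)"
      using that(2) ij(1) by (simp flip: o_apply[of "g ^^ (n - i)"] funpow_add)
    also have "\<dots> = (g ^^ (n - i)) ((g ^^ i) q)" using cycle that(1) by simp
    also have "\<dots> = (g ^^ n) q"
      using that(2) by (simp flip: o_apply[of "g ^^ (n - i)"] funpow_add)
    finally show ?thesis using that(2) by simp
  qed
  have "(g ^^ (n + k * (j - i))) q = (g ^^ n) q" if "q \<in> Q" "i \<le> n" for q n k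
    using shift_invariant_mult[of "\<lambda>n. i \<le> n" "j - i" "\<lambda>n. (g ^^ n) q"] step[OF that(1)] that(2)
    by blast
  then show thesis using ij(1) by (intro that[of "j - i" i]) auto
qed

definition letter_both :: "unit option list" where "letter_both = [Some (), Some ()]"
definition letter_fst :: "unit option list" where "letter_fst = [Some (), None]"
definition letter_snd :: "unit option list" where "letter_snd = [None, Some ()]"

lemma letters_distinct [simp]:
  "letter_both \<noteq> letter_fst" "letter_both \<noteq> letter_snd" "letter_fst \<noteq> letter_snd"
  "letter_fst \<noteq> letter_both" "letter_snd \<noteq> letter_both" "letter_snd \<noteq> letter_fst"
  by (auto simp: letter_both_def letter_fst_def letter_snd_def)

definition unary_pair_word :: "nat \<Rightarrow> nat \<Rightarrow> unit option list list" where
  "unary_pair_word m n =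
     replicate (min m n) letter_both @ replicate (n - m) letter_snd @ replicate (m - n) letter_fst"

lemma conv_replicate_pair: "conv [replicate m (), replicate n ()] = unary_pair_word m n"
proof (rule nth_equalityI)
  show "length (conv [replicate m (), replicate n ()]) = length (unary_pair_word m n)"
    by (simp add: conv_def unary_pair_word_def)
  fix j assume "j < length (conv [replicate m (), replicate n ()])"
  then have "j < max m n" by (simp add: conv_def)
  then show "conv [replicate m (), replicate n ()] ! j = unary_pair_word m n ! j"
    by (cases "m \<le> n")
      (auto simp: conv_def unary_pair_word_def nth_append letter_both_def letter_fst_def letter_snd_def)
qed

lemma unary_pair_word_inj:
  assumes "unary_pair_word m n = unary_pair_word m' n'"
  shows "m = m' \<and> n = n'"
proof -
  have count_replicate: "count_list (replicate k x) y = (if x = y then k else 0)" for k x y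
    by (induction k) auto
  have "count_list (unary_pair_word m n) letter_both = min m n"
       "count_list (unary_pair_word m n) letter_snd = n - m"
       "count_list (unary_pair_word m n) letter_fst = m - n" for m n
    by (simp_all add: unary_pair_word_def count_replicate)
  from this[of m n] this[of m' n'] assms
  have "min m n = min m' n'" "n - m = n' - m'" "m - n = m' - n'" by metis+
  then show ?thesis by (cases "m \<le> n"; cases "m' \<le> n'") (auto simp: min_def)
qed

lemma unary_pair_word_snoc:
  "unary_pair_word m m @ [letter_both] = unary_pair_word (Suc m) (Suc m)"
  "m \<le> n \<Longrightarrow> unary_pair_word m n @ [letter_snd] = unary_pair_word m (Suc n)"
  "n \<le> m \<Longrightarrow> unary_pair_word m n @ [letter_fst] = unary_pair_word (Suc m) n"
  by (simp_all add: unary_pair_word_def replicate_append_same Suc_diff_le)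

lemma foldl_unary_pair_word:
  "foldl \<delta> q (unary_pair_word m n) =
     ((\<lambda>q. \<delta> q letter_fst) ^^ (m - n)) (((\<lambda>q. \<delta> q letter_snd) ^^ (n - m))
       (((\<lambda>q. \<delta> q letter_both) ^^ min m n) q))"
  by (simp add: unary_pair_word_def foldl_replicate)

lemma unit_list_eq_replicate: "(u :: unit list) = replicate (length u) ()"
  by (simp add: replicate_length_same)

lemma conv_Lambda_unary:
  "conv ` Lambda UNIV \<phi> 2 R =
     {unary_pair_word m n | m n. [\<phi> (replicate m ()), \<phi> (replicate n ())] \<in> R}"
proof safe
  fix ws assume "ws \<in> Lambda UNIV \<phi> 2 R"
  then obtain u v where "ws = [u, v]" "[\<phi> u, \<phi> v] \<in> R"
    by (auto simp: Lambda_def numeral_2_eq_2 length_Suc_conv)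
  then show "\<exists>m n. conv ws = unary_pair_word m n \<and> [\<phi> (replicate m ()), \<phi> (replicate n ())] \<in> R"
    using conv_replicate_pair unit_list_eq_replicate by metis
next
  fix m n assume "[\<phi> (replicate m ()), \<phi> (replicate n ())] \<in> R"
  then have "[replicate m (), replicate n ()] \<in> Lambda UNIV \<phi> 2 R" by (simp add: Lambda_def)
  then show "unary_pair_word m n \<in> conv ` Lambda UNIV \<phi> 2 R" using conv_replicate_pair by (metis image_eqI)
qed

definition eventually_periodic :: "nat \<Rightarrow> nat \<Rightarrow> (nat \<Rightarrow> nat \<Rightarrow> bool) \<Rightarrow> bool" where
  "eventually_periodic K p X \<longleftrightarrow> 0 < p \<and>
     (\<forall>m n. K \<le> m \<longrightarrow> K \<le> n \<longrightarrow> X (m + p) (n + p) = X m n) \<and>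
     (\<forall>m n. m + K \<le> n \<longrightarrow> X m (n + p) = X m n) \<and>
     (\<forall>m n. n + K \<le> m \<longrightarrow> X (m + p) n = X m n)"

lemma eventually_periodic_conversep:
  "eventually_periodic K p X \<Longrightarrow> eventually_periodic K p X\<inverse>\<inverse>"
  by (simp add: eventually_periodic_def)

lemma eventually_periodic_sup:
  "eventually_periodic K p X \<Longrightarrow> eventually_periodic K p Y \<Longrightarrow> eventually_periodic K p (sup X Y)"
  by (simp add: eventually_periodic_def)

lemma eventually_periodic_symclp:
  "eventually_periodic K p X \<Longrightarrow> eventually_periodic K p (symclp X)"
  by (simp add: symclp_pointfree eventually_periodic_sup eventually_periodic_conversep)

lemma eventually_periodic_mult:
  assumes "eventually_periodic K p X"
  shows eventually_periodic_mult_diag: "K \<le> m \<Longrightarrow> K \<le> n \<Longrightarrow> X (m + k * p) (n + k * p) = X m n"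
    and eventually_periodic_mult_snd: "m + K \<le> n \<Longrightarrow> X m (n + k * p) = X m n"
    and eventually_periodic_mult_fst: "n + K \<le> m \<Longrightarrow> X (m + k * p) n = X m n"
proof -
  show "K \<le> m \<Longrightarrow> K \<le> n \<Longrightarrow> X (m + k * p) (n + k * p) = X m n"
    using shift_invariant_mult[of "\<lambda>_. True" p "\<lambda>t. X (m + t) (n + t)" 0 k] assms
    by (simp add: eventually_periodic_def add.assoc[symmetric])
  show "m + K \<le> n \<Longrightarrow> X m (n + k * p) = X m n"
    using shift_invariant_mult[of "\<lambda>n. m + K \<le> n" p "X m"] assms
    by (simp add: eventually_periodic_def)
  show "n + K \<le> m \<Longrightarrow> X (m + k * p) n = X m n"
    using shift_invariant_mult[of "\<lambda>m. n + K \<le> m" p "\<lambda>m. X m n"] assms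
    by (simp add: eventually_periodic_def)
qed

lemma eventually_periodic_if_funpow:
  assumes "finite Q" "q0 \<in> Q"
    and closed: "\<forall>q\<in>Q. gb q \<in> Q" "\<forall>q\<in>Q. gs q \<in> Q" "\<forall>q\<in>Q. gf q \<in> Q"
    and X: "\<And>m n. X m n \<longleftrightarrow> (gf ^^ (m - n)) ((gs ^^ (n - m)) ((gb ^^ min m n) q0)) \<in> F"
  shows "\<exists>K p. eventually_periodic K p X"
proof -
  obtain pb Kb where b: "0 < pb" "\<And>q n k. q \<in> Q \<Longrightarrow> Kb \<le> n \<Longrightarrow> (gb ^^ (n + k * pb)) q = (gb ^^ n) q"
    using funpow_eventually_periodic[OF assms(1) closed(1)] by metis
  obtain ps Ks where s: "0 < ps" "\<And>q n k. q \<in> Q \<Longrightarrow> Ks \<le> n \<Longrightarrow> (gs ^^ (n + k * ps)) q = (gs ^^ n) q"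
    using funpow_eventually_periodic[OF assms(1) closed(2)] by metis
  obtain pf Kf where f: "0 < pf" "\<And>q n k. q \<in> Q \<Longrightarrow> Kf \<le> n \<Longrightarrow> (gf ^^ (n + k * pf)) q = (gf ^^ n) q"
    using funpow_eventually_periodic[OF assms(1) closed(3)] by metis
  define K where "K = Kb + Ks + Kf"
  define p where "p = pb * ps * pf"
  have inQ: "(gb ^^ k) q0 \<in> Q" "(gs ^^ k) ((gb ^^ k') q0) \<in> Q" for k k'
    using funpow_closed[OF assms(2) closed(1)] funpow_closed[OF _ closed(2)] by blast+
  have "eventually_periodic K p X"
    unfolding eventually_periodic_def
  proof (intro conjI allI impI)
    show "0 < p" using b s f by (simp add: p_def)
  next
    fix m n assume "K \<le> m" "K \<le> n"
    then have "Kb \<le> min m n" by (simp add: K_def)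
    moreover have "min (m + p) (n + p) = min m n + (ps * pf) * pb"
      "n + p - (m + p) = n - m" "m + p - (n + p) = m - n"
      by (simp_all add: p_def min_def mult.commute mult.left_commute)
    ultimately show "X (m + p) (n + p) = X m n" unfolding X using b(2) assms(2) by simp
  next
    fix m n assume mn: "m + K \<le> n"
    then have "Ks \<le> n - m" by (simp add: K_def)
    moreover have "min m (n + p) = min m n" "n + p - m = (n - m) + (pb * pf) * ps"
      "m - (n + p) = m - n"
      using mn by (simp_all add: p_def mult.commute mult.left_commute)
    ultimately show "X m (n + p) = X m n" unfolding X using s(2)[OF inQ(1)] by simp
  next
    fix m n assume mn: "n + K \<le> m"
    then have "Kf \<le> m - n" by (simp add: K_def)
    moreover have "min (m + p) n = min m n" "m + p - n = (m - n) + (pb * ps) * pf"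
      "n - (m + p) = n - m"
      using mn by (simp_all add: p_def mult.commute mult.left_commute)
    ultimately show "X (m + p) n = X m n" unfolding X using f(2)[OF inQ(2)] by simp
  qed
  then show ?thesis by blast
qed

lemma eventually_periodic_if_regular:
  assumes "regular {unary_pair_word m n | m n. X m n}"
  shows "\<exists>K p. eventually_periodic K p X"
proof -
  obtain Q :: "nat set" and q0 \<delta> F where dfa: "finite Q" "q0 \<in> Q" "\<forall>q\<in>Q. \<forall>x. \<delta> q x \<in> Q"
    "{unary_pair_word m n | m n. X m n} = {w. foldl \<delta> q0 w \<in> F}"
    using assms unfolding regular_def by (elim exE conjE) (rule that; assumption)
  have "X m n \<longleftrightarrow> unary_pair_word m n \<in> {unary_pair_word m n | m n. X m n}" for m n
    using unary_pair_word_inj by auto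
  then show ?thesis
    unfolding dfa(4) mem_Collect_eq foldl_unary_pair_word
    using dfa(3) by (intro eventually_periodic_if_funpow[OF dfa(1,2)]) auto
qed

definition periodic_rep :: "nat \<Rightarrow> nat \<Rightarrow> nat \<Rightarrow> nat" where
  "periodic_rep K p x = (if x < K then x else K + (x - K) mod p)"

definition periodic_succ :: "nat \<Rightarrow> nat \<Rightarrow> nat \<Rightarrow> nat" where
  "periodic_succ K p a = (if Suc a < K + p then Suc a else K)"

lemma periodic_rep_0 [simp]: "periodic_rep K p 0 = 0"
  by (simp add: periodic_rep_def)

lemma periodic_rep_Suc: "0 < p \<Longrightarrow> periodic_rep K p (Suc x) = periodic_succ K p (periodic_rep K p x)"
proof (cases "x < K")
  case False
  assume "0 < p"
  then have "Suc (x - K) mod p = (if Suc ((x - K) mod p) = p then 0 else Suc ((x - K) mod p))"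
    "(x - K) mod p < p" by (simp_all add: mod_Suc)
  then show ?thesis using False by (auto simp: periodic_rep_def periodic_succ_def Suc_diff_le)
qed (auto simp: periodic_rep_def periodic_succ_def)

lemma periodic_rep_decomp:
  "K \<le> x \<Longrightarrow> x = periodic_rep K p x + ((x - K) div p) * p \<and> K \<le> periodic_rep K p x"
  by (simp add: periodic_rep_def)

lemma eventually_periodic_le_rep:
  assumes X: "eventually_periodic K p X" and "m \<le> n"
  shows "X m n = X (periodic_rep K p m) (periodic_rep K p m + periodic_rep K p (n - m))"
proof -
  define a where "a = periodic_rep K p m"
  define d where "d = n - m"
  have "X m n = X a (a + d)"
  proof (cases "m < K")
    case False
    then have "m = a + ((m - K) div p) * p" "K \<le> a" "K \<le> a + d" "n = (a + d) + ((m - K) div p) * p"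
      using periodic_rep_decomp[of K m p] \<open>m \<le> n\<close> by (auto simp: a_def d_def)
    then show ?thesis using eventually_periodic_mult_diag[OF X \<open>K \<le> a\<close> \<open>K \<le> a + d\<close>] by metis
  qed (use \<open>m \<le> n\<close> in \<open>simp add: a_def d_def periodic_rep_def\<close>)
  also have "\<dots> = X a (a + periodic_rep K p d)"
  proof (cases "d < K")
    case False
    then have "a + d = (a + periodic_rep K p d) + ((d - K) div p) * p" "a + K \<le> a + periodic_rep K p d"
      using periodic_rep_decomp[of K d p] by auto
    then show ?thesis using eventually_periodic_mult_snd[OF X] by metis
  qed (simp add: periodic_rep_def)
  finally show ?thesis by (simp add: a_def d_def)
qed

lemma eventually_periodic_ge_rep:
  assumes "eventually_periodic K p X" and "n \<le> m"
  shows "X m n = X (periodic_rep K p n + periodic_rep K p (m - n)) (periodic_rep K p n)"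
  using eventually_periodic_le_rep[OF eventually_periodic_conversep[OF assms(1)] assms(2)] by simp

text \<open>States are \<open>(phase, a, b)\<close>: phase 0 while reading diagonal letters, 1 or 2 while
  only the second or only the first word continues, 3 is a dead state; \<open>a\<close> and \<open>b\<close> are the
  lengths of the diagonal part and of the tail, reduced by \<open>periodic_rep\<close>.\<close>

definition pair_dfa :: "nat \<Rightarrow> nat \<Rightarrow> nat \<times> nat \<times> nat \<Rightarrow> unit option list \<Rightarrow> nat \<times> nat \<times> nat" where
  "pair_dfa K p = (\<lambda>(ph, a, b) x.
     if ph = 0 \<and> x = letter_both then (0, periodic_succ K p a, 0)
     else if ph = 0 \<and> x = letter_snd then (1, a, periodic_succ K p 0)
     else if ph = 1 \<and> x = letter_snd then (1, a, periodic_succ K p b)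
     else if ph = 0 \<and> x = letter_fst then (2, a, periodic_succ K p 0)
     else if ph = 2 \<and> x = letter_fst then (2, a, periodic_succ K p b)
     else (3, 0, 0))"

definition pair_state :: "nat \<Rightarrow> nat \<Rightarrow> nat \<Rightarrow> nat \<Rightarrow> nat \<times> nat \<times> nat" where
  "pair_state K p m n =
     (if m = n then (0, periodic_rep K p m, 0)
      else if m < n then (1, periodic_rep K p m, periodic_rep K p (n - m))
      else (2, periodic_rep K p n, periodic_rep K p (m - n)))"

lemma foldl_pair_dfa:
  assumes "0 < p"
  shows "foldl (pair_dfa K p) (0, 0, 0) (unary_pair_word m n) = pair_state K p m n"
proof -
  have diag: "foldl (pair_dfa K p) (0, 0, 0) (unary_pair_word m m) = (0, periodic_rep K p m, 0)" for m
  proof (induction m)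
    case (Suc m)
    then show ?case
      using periodic_rep_Suc[OF assms] by (simp add: pair_dfa_def flip: unary_pair_word_snoc(1))
  qed (simp add: unary_pair_word_def)
  have "foldl (pair_dfa K p) (0, 0, 0) (unary_pair_word m (m + d)) = pair_state K p m (m + d)" for d
  proof (induction d)
    case (Suc d)
    have "unary_pair_word m (m + Suc d) = unary_pair_word m (m + d) @ [letter_snd]"
      by (simp add: unary_pair_word_snoc)
    then show ?case using Suc periodic_rep_Suc[OF assms]
      by (cases d) (simp_all add: pair_dfa_def pair_state_def)
  qed (simp add: diag pair_state_def)
  moreover have "foldl (pair_dfa K p) (0, 0, 0) (unary_pair_word (n + d) n) = pair_state K p (n + d) n" for d
  proof (induction d)
    case (Suc d)
    have "unary_pair_word (n + Suc d) n = unary_pair_word (n + d) n @ [letter_fst]"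
      by (simp add: unary_pair_word_snoc)
    then show ?case using Suc periodic_rep_Suc[OF assms]
      by (cases d) (simp_all add: pair_dfa_def pair_state_def)
  qed (simp add: diag pair_state_def)
  ultimately show ?thesis by (metis le_add_diff_inverse nat_le_linear)
qed

lemma foldl_pair_dfa_dead:
  assumes "0 < p"
  shows "(\<exists>m n. w = unary_pair_word m n) \<or> fst (foldl (pair_dfa K p) (0, 0, 0) w) = 3"
proof (induction w rule: rev_induct)
  case Nil
  have "[] = unary_pair_word 0 0" by (simp add: unary_pair_word_def)
  then show ?case by blast
next
  case (snoc x w)
  show ?case
  proof (cases "fst (foldl (pair_dfa K p) (0, 0, 0) w) = 3")
    case True
    then show ?thesis by (cases "foldl (pair_dfa K p) (0, 0, 0) w") (simp add: pair_dfa_def)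
  next
    case False
    then obtain m n where w: "w = unary_pair_word m n" using snoc by blast
    then have step: "foldl (pair_dfa K p) (0, 0, 0) (w @ [x]) = pair_dfa K p (pair_state K p m n) x"
      using foldl_pair_dfa[OF assms] by simp
    consider "x = letter_both" "m = n" | "x = letter_snd" "m \<le> n" | "x = letter_fst" "n \<le> m"
      | "fst (pair_dfa K p (pair_state K p m n) x) = 3"
      unfolding pair_dfa_def pair_state_def
      by (cases "m = n"; cases "m < n"; cases "x = letter_both"; cases "x = letter_snd"; cases "x = letter_fst") auto
    then show ?thesis
      using unary_pair_word_snoc(1)[where m = m] unary_pair_word_snoc(2,3)[where m = m and n = n] w step
      by cases auto
  qed
qed

lemma regular_if_eventually_periodic:
  assumes X: "eventually_periodic K p X"
  shows "regular {unary_pair_word m n | m n. X m n}"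
proof -
  have p: "0 < p" using X by (simp add: eventually_periodic_def)
  define accept where "accept = (\<lambda>(ph, a, b).
    (ph = (0::nat) \<and> X a a) \<or> (ph = 1 \<and> X a (a + b)) \<or> (ph = 2 \<and> X (a + b) a))"
  have accept_pair_state: "accept (pair_state K p m n) \<longleftrightarrow> X m n" for m n
    using eventually_periodic_le_rep[OF X, of m n] eventually_periodic_ge_rep[OF X, of n m]
    by (cases "m = n"; cases "m < n") (auto simp: pair_state_def accept_def)
  have language: "{unary_pair_word m n | m n. X m n} = {w. foldl (pair_dfa K p) (0, 0, 0) w \<in> Collect accept}"
  proof (rule set_eqI, rule iffI)
    fix w assume "w \<in> {w. foldl (pair_dfa K p) (0, 0, 0) w \<in> Collect accept}"
    then have a: "accept (foldl (pair_dfa K p) (0, 0, 0) w)" by simp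
    then have "fst (foldl (pair_dfa K p) (0, 0, 0) w) \<noteq> 3"
      by (cases "foldl (pair_dfa K p) (0, 0, 0) w") (auto simp: accept_def)
    then obtain m n where "w = unary_pair_word m n" using foldl_pair_dfa_dead[OF p] by blast
    then show "w \<in> {unary_pair_word m n | m n. X m n}"
      using a foldl_pair_dfa[OF p] accept_pair_state by auto
  qed (use foldl_pair_dfa[OF p] accept_pair_state in auto)
  define states where "states = {..3::nat} \<times> {..<K + p} \<times> {..<K + p}"
  have closed: "\<forall>q\<in>states. \<forall>x. pair_dfa K p q x \<in> states"
    using p by (auto simp: states_def pair_dfa_def periodic_succ_def)
  show ?thesis by (rule regularI_dfa[OF _ _ closed language]) (use p in \<open>auto simp: states_def\<close>)
qed

lemma regular_rel_unary_iff_eventually_periodic: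
  fixes \<phi> :: "unit list \<Rightarrow> 's"
  shows "regular_rel (Lambda UNIV \<phi> 2 R) \<longleftrightarrow>
    (\<exists>K p. eventually_periodic K p (\<lambda>m n. [\<phi> (replicate m ()), \<phi> (replicate n ())] \<in> R))"
  unfolding regular_rel_def conv_Lambda_unary
  using eventually_periodic_if_regular[of "\<lambda>m n. [\<phi> (replicate m ()), \<phi> (replicate n ())] \<in> R"]
    regular_if_eventually_periodic[of _ _ "\<lambda>m n. [\<phi> (replicate m ()), \<phi> (replicate n ())] \<in> R"]
  by blast

text \<open>A symmetric eventually periodic relation above its threshold \<open>K\<close>, translated down
  by \<open>K\<close> (see \<open>shifted\<close> below).\<close>

locale periodic_graph =
  fixes F :: "nat \<Rightarrow> nat \<Rightarrow> bool" and p K :: nat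
  assumes period_pos: "0 < p"
    and symp_F: "symp F"
    and shift: "\<And>u v. F (u + p) (v + p) = F u v"
    and long_edge: "\<And>u v. u + K \<le> v \<Longrightarrow> F u (v + p) = F u v"
begin

lemma shift_mult: "F (u + k * p) (v + k * p) = F u v"
  using shift_invariant_mult[of "\<lambda>_. True" p "\<lambda>t. F (u + t) (v + t)" 0 k] shift
  by (simp add: add.assoc[symmetric])

lemma long_edge_mult: "u + K \<le> v \<Longrightarrow> F (v + k * p) u = F v u"
proof -
  have "F (v + p) u = F v u" if "u + K \<le> v" for v
    using long_edge[OF that] sympD[OF symp_F] by blast
  then show "u + K \<le> v \<Longrightarrow> F (v + k * p) u = F v u"
    using shift_invariant_mult[of "\<lambda>v. u + K \<le> v" p "\<lambda>v. F v u"] by simp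
qed

lemma reach_sym: "F\<^sup>*\<^sup>* u v \<Longrightarrow> F\<^sup>*\<^sup>* v u"
  using sympD[OF symp_rtranclp[OF symp_F]] .

lemma reach_shift: "F\<^sup>*\<^sup>* u v \<Longrightarrow> F\<^sup>*\<^sup>* (u + k * p) (v + k * p)"
proof (induction rule: rtranclp_induct)
  case (step y z)
  then show ?case using shift_mult[of y k z] by (metis rtranclp.rtrancl_into_rtrancl)
qed simp

lemma reach_unshift:
  assumes "\<forall>z. F\<^sup>*\<^sup>* x z \<longrightarrow> k * p \<le> z" "F\<^sup>*\<^sup>* x y"
  shows "F\<^sup>*\<^sup>* (x - k * p) (y - k * p)"
  using assms(2)
proof (induction rule: rtranclp_induct)
  case (step y z)
  have "k * p \<le> y" "k * p \<le> z" using assms(1) step by (auto intro: rtranclp.rtrancl_into_rtrancl)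
  then have "F (y - k * p) (z - k * p)" using shift_mult[of "y - k * p" k "z - k * p"] step(2) by simp
  then show ?case using step(3) by (metis rtranclp.rtrancl_into_rtrancl)
qed simp

definition component :: "nat \<Rightarrow> nat set" where "component u = {v. F\<^sup>*\<^sup>* u v}"

lemma component_translate:
  obtains j r where "r < p" "\<And>z. F\<^sup>*\<^sup>* u z \<Longrightarrow> j * p \<le> z \<and> F\<^sup>*\<^sup>* r (z - j * p)"
    "\<And>y. F\<^sup>*\<^sup>* r y \<Longrightarrow> F\<^sup>*\<^sup>* u (y + j * p)"
proof -
  define m where "m = (LEAST w. F\<^sup>*\<^sup>* u w)"
  define j where "j = m div p"
  define r where "r = m mod p"
  have um: "F\<^sup>*\<^sup>* u m" unfolding m_def by (rule LeastI[of _ u]) simp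
  have "F\<^sup>*\<^sup>* u z \<Longrightarrow> m \<le> z" for z unfolding m_def by (rule Least_le)
  moreover have "j * p \<le> m" by (simp add: j_def)
  ultimately have above: "\<forall>z. F\<^sup>*\<^sup>* m z \<longrightarrow> j * p \<le> z"
    using um by (meson le_trans rtranclp_trans)
  have m: "m - j * p = r" "r + j * p = m"
    by (simp_all add: j_def r_def minus_div_mult_eq_mod mod_div_mult_eq)
  show thesis
  proof (rule that[of r j])
    show "r < p" using period_pos by (simp add: r_def)
    show "j * p \<le> z \<and> F\<^sup>*\<^sup>* r (z - j * p)" if "F\<^sup>*\<^sup>* u z" for z
    proof -
      have "F\<^sup>*\<^sup>* m z" using reach_sym[OF um] that by (rule rtranclp_trans)
      then show ?thesis using reach_unshift[OF above] above m(1) by metis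
    qed
    show "F\<^sup>*\<^sup>* u (y + j * p)" if "F\<^sup>*\<^sup>* r y" for y
      using reach_shift[OF that, of j] m(2) um by (metis rtranclp_trans)
  qed
qed

definition diam_bound :: nat where
  "diam_bound = (\<Sum>r<p. if finite (component r) then Max (component r) else 0)"

lemma finite_component_span:
  assumes "finite (component u)" "F\<^sup>*\<^sup>* u w"
  shows "w \<le> u + diam_bound \<and> u \<le> w + diam_bound"
proof -
  obtain j r where r: "r < p" "\<And>z. F\<^sup>*\<^sup>* u z \<Longrightarrow> j * p \<le> z \<and> F\<^sup>*\<^sup>* r (z - j * p)"
    "\<And>y. F\<^sup>*\<^sup>* r y \<Longrightarrow> F\<^sup>*\<^sup>* u (y + j * p)" by (rule component_translate[of u]) blast
  have "component r \<subseteq> (\<lambda>z. z - j * p) ` component u"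
  proof
    fix y assume "y \<in> component r"
    then have "y + j * p \<in> component u" using r(3) by (simp add: component_def)
    then show "y \<in> (\<lambda>z. z - j * p) ` component u" by (metis add_diff_cancel_right' image_eqI)
  qed
  then have fin: "finite (component r)" using assms(1) finite_subset by blast
  have "(if finite (component r) then Max (component r) else 0) \<le> diam_bound"
    unfolding diam_bound_def by (rule member_le_sum) (use r(1) in auto)
  moreover have "z - j * p \<le> Max (component r)" if "F\<^sup>*\<^sup>* u z" for z
    using r(2)[OF that] fin by (simp add: component_def)
  ultimately have "z - j * p \<le> diam_bound" "j * p \<le> z" if "F\<^sup>*\<^sup>* u z" for z
    using that r(2) fin by (auto intro: le_trans)
  from this[OF assms(2)] this[of u] show ?thesis by auto
qed

lemma infinite_component_loop:
  assumes "infinite (component r)"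
  shows "\<exists>i>0. F\<^sup>*\<^sup>* r (r + i * p)"
proof -
  have "finite ((\<lambda>y. y mod p) ` component r)"
    by (rule finite_subset[of _ "{..<p}"]) (use period_pos in auto)
  then have "\<not> inj_on (\<lambda>y. y mod p) (component r)" using finite_imageD assms by blast
  then obtain x y where xy: "F\<^sup>*\<^sup>* r x" "F\<^sup>*\<^sup>* r y" "x < y" "x mod p = y mod p"
    unfolding inj_on_def component_def by (metis linorder_neqE_nat mem_Collect_eq)
  then have "p dvd y - x" using mod_eq_dvd_iff_nat[of x y p] by simp
  then obtain i where i: "y - x = p * i" by (rule dvdE)
  then have "0 < i" "y = x + i * p" using xy(3) by (auto simp: algebra_simps intro: gr0I)
  moreover have "F\<^sup>*\<^sup>* (r + i * p) y" using reach_shift[OF xy(1), of i] \<open>y = x + i * p\<close> by simp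
  ultimately show ?thesis using xy(2) reach_sym by (metis rtranclp_trans)
qed

lemma loop_mult: "F\<^sup>*\<^sup>* r (r + i * p) \<Longrightarrow> F\<^sup>*\<^sup>* r (r + k * (i * p))"
proof (induction k)
  case (Suc k)
  have "F\<^sup>*\<^sup>* (r + k * (i * p)) (r + i * p + k * (i * p))"
    using reach_shift[OF Suc.prems, of "k * i"] by (simp add: algebra_simps)
  then show ?case using Suc by (simp add: rtranclp_trans add.assoc)
qed simp

lemma uniform_loop: "\<exists>c>0. \<forall>u. infinite (component u) \<longrightarrow> F\<^sup>*\<^sup>* u (u + c * p)"
proof -
  define I where "I = {r. r < p \<and> infinite (component r)}"
  define loop where "loop = (\<lambda>r. SOME i. 0 < i \<and> F\<^sup>*\<^sup>* r (r + i * p))"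
  have loop: "0 < loop r \<and> F\<^sup>*\<^sup>* r (r + loop r * p)" if "r \<in> I" for r
    unfolding loop_def by (rule someI_ex) (use infinite_component_loop that I_def in auto)
  define c where "c = prod loop I"
  have "finite I" by (simp add: I_def)
  have c: "F\<^sup>*\<^sup>* r (r + c * p)" if r: "r \<in> I" for r
  proof -
    obtain k where "c = loop r * k" using dvd_prodI[OF \<open>finite I\<close> r] by (auto simp: c_def)
    then show ?thesis using loop_mult[of r "loop r" k] loop[OF r] by (simp add: mult.commute mult.left_commute)
  qed
  have "F\<^sup>*\<^sup>* u (u + c * p)" if "infinite (component u)" for u
  proof -
    obtain j r where r: "r < p" "\<And>z. F\<^sup>*\<^sup>* u z \<Longrightarrow> j * p \<le> z \<and> F\<^sup>*\<^sup>* r (z - j * p)"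
      "\<And>y. F\<^sup>*\<^sup>* r y \<Longrightarrow> F\<^sup>*\<^sup>* u (y + j * p)" by (rule component_translate[of u]) blast
    have "component u \<subseteq> (\<lambda>y. y + j * p) ` component r"
    proof
      fix z assume "z \<in> component u"
      then have "j * p \<le> z \<and> z - j * p \<in> component r" using r(2) by (simp add: component_def)
      then show "z \<in> (\<lambda>y. y + j * p) ` component r" by (metis le_add_diff_inverse2 image_eqI)
    qed
    then have "r \<in> I" using that r(1) finite_subset unfolding I_def by blast
    then have "F\<^sup>*\<^sup>* (r + j * p) (r + j * p + c * p)"
      using reach_shift[OF c, of r j] by (simp add: algebra_simps)
    moreover have "F\<^sup>*\<^sup>* (u + c * p) (r + j * p + c * p)"
      using reach_shift[OF r(3)[of r], of c] by (simp add: algebra_simps)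
    ultimately show ?thesis using r(3)[of r] reach_sym by (metis rtranclp.rtrancl_refl rtranclp_trans)
  qed
  moreover have "0 < c" unfolding c_def using loop by (simp add: prod_pos)
  ultimately show ?thesis by blast
qed

end

context periodic_graph
begin

definition loop_factor :: nat where
  "loop_factor = (SOME c. 0 < c \<and> (\<forall>u. infinite (component u) \<longrightarrow> F\<^sup>*\<^sup>* u (u + c * p)))"

lemma loop_factor: "0 < loop_factor" "infinite (component u) \<Longrightarrow> F\<^sup>*\<^sup>* u (u + loop_factor * p)"
  using someI_ex[OF uniform_loop] unfolding loop_factor_def by blast+

lemma reach_unshift_finite:
  assumes u: "diam_bound + K + loop_factor * p \<le> u" and fin: "finite (component u)"
    and "F\<^sup>*\<^sup>* (u + loop_factor * p) w"
  shows "loop_factor * p \<le> w \<and> F\<^sup>*\<^sup>* u (w - loop_factor * p)"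
  using assms(3)
proof (induction rule: rtranclp_induct)
  case (step y z)
  have y: "loop_factor * p \<le> y" "F\<^sup>*\<^sup>* u (y - loop_factor * p)" using step.IH by auto
  have close: "u \<le> y - loop_factor * p + diam_bound" using finite_component_span[OF fin y(2)] by simp
  show ?case
  proof (cases "loop_factor * p \<le> z")
    case True
    have "F (y - loop_factor * p) (z - loop_factor * p)"
      using shift_mult[of "y - loop_factor * p" loop_factor "z - loop_factor * p"] y(1) True step(2) by simp
    then show ?thesis using True y(2) by (metis rtranclp.rtrancl_into_rtrancl)
  next
    case False
    \<comment> \<open>so low a vertex is reached by a long edge, and long edges are periodic\<close>
    have "z + K \<le> y - loop_factor * p" using False close u by linarith
    then have "F (y - loop_factor * p) z"
      using long_edge_mult[of z "y - loop_factor * p" loop_factor] y(1) step(2) by simp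
    then have "F\<^sup>*\<^sup>* u z" using y(2) by (metis rtranclp.rtrancl_into_rtrancl)
    then have "u \<le> z + diam_bound" using finite_component_span[OF fin] by blast
    then show ?thesis using False u by linarith
  qed
qed simp

lemma reach_shift_iff:
  assumes "diam_bound + K + loop_factor * p \<le> u" "diam_bound + K + loop_factor * p \<le> v"
  shows "F\<^sup>*\<^sup>* (u + loop_factor * p) (v + loop_factor * p) \<longleftrightarrow> F\<^sup>*\<^sup>* u v"
proof
  assume "F\<^sup>*\<^sup>* u v"
  then show "F\<^sup>*\<^sup>* (u + loop_factor * p) (v + loop_factor * p)" by (rule reach_shift)
next
  assume h: "F\<^sup>*\<^sup>* (u + loop_factor * p) (v + loop_factor * p)"
  consider "finite (component u)" | "finite (component v)"
    | "infinite (component u)" "infinite (component v)" by blast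
  then show "F\<^sup>*\<^sup>* u v"
  proof cases
    case 1
    then show ?thesis using reach_unshift_finite[OF assms(1) 1 h] by simp
  next
    case 2
    then show ?thesis using reach_unshift_finite[OF assms(2) 2 reach_sym[OF h]] reach_sym by simp
  next
    case 3
    then show ?thesis using loop_factor(2) h reach_sym by (metis rtranclp_trans)
  qed
qed

lemma reach_far_shift_iff:
  assumes "diam_bound + K + loop_factor * p \<le> v" "u + diam_bound < v"
  shows "F\<^sup>*\<^sup>* u (v + loop_factor * p) \<longleftrightarrow> F\<^sup>*\<^sup>* u v"
proof (cases "finite (component v)")
  case True
  \<comment> \<open>then neither side holds: \<open>u\<close> lies below the bounded span of this component\<close>
  have "\<not> F\<^sup>*\<^sup>* u v"
    using finite_component_span[OF True] reach_sym assms(2) by fastforce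
  moreover have "\<not> F\<^sup>*\<^sup>* u (v + loop_factor * p)"
  proof
    assume "F\<^sup>*\<^sup>* u (v + loop_factor * p)"
    then have "loop_factor * p \<le> u \<and> F\<^sup>*\<^sup>* v (u - loop_factor * p)"
      using reach_unshift_finite[OF assms(1) True] reach_sym by blast
    then show False using finite_component_span[OF True] assms(2) by fastforce
  qed
  ultimately show ?thesis by simp
next
  case False
  then show ?thesis using loop_factor(2) reach_sym by (metis rtranclp_trans)
qed

lemma ex_reach_shift_iff:
  assumes P: "\<And>w. K \<le> w \<Longrightarrow> P (w + loop_factor * p) = P w"
    and u: "diam_bound + K + K + loop_factor * p \<le> u"
  shows "(\<exists>w. F\<^sup>*\<^sup>* (u + loop_factor * p) w \<and> P w) \<longleftrightarrow> (\<exists>w. F\<^sup>*\<^sup>* u w \<and> P w)"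
proof (cases "finite (component u)")
  case True
  have u': "diam_bound + K + loop_factor * p \<le> u" using u by simp
  show ?thesis
  proof
    assume "\<exists>w. F\<^sup>*\<^sup>* (u + loop_factor * p) w \<and> P w"
    then obtain w where w: "F\<^sup>*\<^sup>* (u + loop_factor * p) w" "P w" by blast
    then have w': "loop_factor * p \<le> w" "F\<^sup>*\<^sup>* u (w - loop_factor * p)"
      using reach_unshift_finite[OF u' True] by auto
    then have "K \<le> w - loop_factor * p" using finite_component_span[OF True] u by fastforce
    then have "P (w - loop_factor * p)" using P[of "w - loop_factor * p"] w(2) w'(1) by simp
    then show "\<exists>w. F\<^sup>*\<^sup>* u w \<and> P w" using w' by blast
  next
    assume "\<exists>w. F\<^sup>*\<^sup>* u w \<and> P w"
    then obtain w where w: "F\<^sup>*\<^sup>* u w" "P w" by blast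
    then have "K \<le> w" using finite_component_span[OF True] u by fastforce
    then show "\<exists>w. F\<^sup>*\<^sup>* (u + loop_factor * p) w \<and> P w" using P w reach_shift[OF w(1)] by blast
  qed
next
  case False
  then show ?thesis using loop_factor(2) reach_sym by (meson rtranclp_trans)
qed

end

definition shifted :: "(nat \<Rightarrow> nat \<Rightarrow> bool) \<Rightarrow> nat \<Rightarrow> nat \<Rightarrow> nat \<Rightarrow> bool" where
  "shifted E K a b \<longleftrightarrow> E (a + K) (b + K)"

lemma rtranclp_shifted: "(shifted E K)\<^sup>*\<^sup>* a b \<Longrightarrow> E\<^sup>*\<^sup>* (a + K) (b + K)"
proof (induction rule: rtranclp_induct)
  case (step y z)
  then show ?case by (metis shifted_def rtranclp.rtrancl_into_rtrancl)
qed simp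

text \<open>Some \<open>E\<close>-path from \<open>u\<close> to \<open>s\<close> visits only vertices \<open>\<ge> K\<close> before arriving at \<open>s\<close>.\<close>

definition high_path :: "(nat \<Rightarrow> nat \<Rightarrow> bool) \<Rightarrow> nat \<Rightarrow> nat \<Rightarrow> nat \<Rightarrow> bool" where
  "high_path E K u s \<longleftrightarrow> u = s \<or> (K \<le> u \<and> (\<exists>w. (shifted E K)\<^sup>*\<^sup>* (u - K) w \<and> E (w + K) s))"

text \<open>An \<open>E\<close>-path either stays at or above \<open>K\<close>, or has a first and a last vertex below \<open>K\<close>.\<close>

definition split_reach :: "(nat \<Rightarrow> nat \<Rightarrow> bool) \<Rightarrow> nat \<Rightarrow> nat \<Rightarrow> nat \<Rightarrow> bool" where
  "split_reach E K u v \<longleftrightarrow> (K \<le> u \<and> K \<le> v \<and> (shifted E K)\<^sup>*\<^sup>* (u - K) (v - K)) \<or>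
     (\<exists>s t. s < K \<and> t < K \<and> high_path E K u s \<and> high_path E K v t \<and> E\<^sup>*\<^sup>* s t)"

lemma rtranclp_if_high_path:
  assumes "high_path E K u s"
  shows "E\<^sup>*\<^sup>* u s"
proof (cases "u = s")
  case False
  then obtain w where "K \<le> u" "(shifted E K)\<^sup>*\<^sup>* (u - K) w" "E (w + K) s"
    using assms by (auto simp: high_path_def)
  then show ?thesis using rtranclp_shifted[of E K "u - K" w] by (simp add: rtranclp.rtrancl_into_rtrancl)
qed simp

lemma rtranclp_if_split_reach:
  assumes "symp E" "split_reach E K u v"
  shows "E\<^sup>*\<^sup>* u v"
  using assms(2) unfolding split_reach_def
proof (elim disjE exE conjE)
  fix s t assume "high_path E K u s" "high_path E K v t" "E\<^sup>*\<^sup>* s t"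
  moreover have "E\<^sup>*\<^sup>* t v"
    by (rule sympD[OF symp_rtranclp[OF assms(1)] rtranclp_if_high_path[OF calculation(2)]])
  ultimately show "E\<^sup>*\<^sup>* u v" using rtranclp_if_high_path by (metis rtranclp_trans)
qed (use rtranclp_shifted[of E K "u - K" "v - K"] in simp)

lemma split_reach_step_high:
  assumes "E y x" "K \<le> u" "K \<le> y" "(shifted E K)\<^sup>*\<^sup>* (u - K) (y - K)"
  shows "split_reach E K u x"
proof (cases "K \<le> x")
  case True
  then have "shifted E K (y - K) (x - K)" using assms(1,3) by (simp add: shifted_def)
  then show ?thesis using assms(2,4) True unfolding split_reach_def by (metis rtranclp.rtrancl_into_rtrancl)
next
  case False
  have "high_path E K u x" using assms unfolding high_path_def by auto
  moreover have "high_path E K x x" by (simp add: high_path_def)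
  ultimately show ?thesis using False unfolding split_reach_def by (meson not_le rtranclp.rtrancl_refl)
qed

lemma split_reach_step_low:
  assumes "symp E" "s < K" "t < K" "high_path E K u s" "high_path E K y t" "E\<^sup>*\<^sup>* s t" "E y x"
  shows "split_reach E K u x"
proof (cases "K \<le> x")
  case False
  have "E\<^sup>*\<^sup>* t y" by (rule sympD[OF symp_rtranclp[OF assms(1)] rtranclp_if_high_path[OF assms(5)]])
  then have "E\<^sup>*\<^sup>* s x" using assms(6,7) by (metis rtranclp_trans rtranclp.rtrancl_into_rtrancl)
  moreover have "high_path E K x x" by (simp add: high_path_def)
  ultimately show ?thesis using assms(2,4) False unfolding split_reach_def by force
next
  case True
  have Exy: "E x y" using assms(7) sympD[OF assms(1)] by blast
  have "high_path E K x t"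
  proof (cases "y = t")
    case True
    then show ?thesis using Exy \<open>K \<le> x\<close> unfolding high_path_def by force
  next
    case False
    then obtain w where w: "K \<le> y" "(shifted E K)\<^sup>*\<^sup>* (y - K) w" "E (w + K) t"
      using assms(5) by (auto simp: high_path_def)
    have "shifted E K (x - K) (y - K)" using Exy w(1) \<open>K \<le> x\<close> by (simp add: shifted_def)
    then have "(shifted E K)\<^sup>*\<^sup>* (x - K) w" using w(2) by (metis converse_rtranclp_into_rtranclp)
    then show ?thesis using w(3) \<open>K \<le> x\<close> unfolding high_path_def by blast
  qed
  then show ?thesis using assms(2-6) unfolding split_reach_def by blast
qed

lemma rtranclp_iff_split_reach:
  assumes "symp E"
  shows "E\<^sup>*\<^sup>* u v \<longleftrightarrow> split_reach E K u v"
proof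
  assume "E\<^sup>*\<^sup>* u v"
  then show "split_reach E K u v"
  proof (induction rule: rtranclp_induct)
    case base
    then show ?case by (cases "K \<le> u") (auto simp: split_reach_def high_path_def)
  next
    case (step y x)
    from step.IH show ?case
      unfolding split_reach_def[of E K u y]
      using split_reach_step_high[of E y x, OF step(2)] split_reach_step_low[OF assms _ _ _ _ _ step(2)]
      by blast
  qed
qed (rule rtranclp_if_split_reach[OF assms])

locale symmetric_eventually_periodic =
  fixes E :: "nat \<Rightarrow> nat \<Rightarrow> bool" and K p :: nat
  assumes periodic: "eventually_periodic K p E" and symp_E: "symp E"
begin

sublocale high: periodic_graph "shifted E K" p K
proof
  show "0 < p" using periodic by (simp add: eventually_periodic_def)
  show "symp (shifted E K)" using symp_E by (simp add: symp_def shifted_def)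
  show "shifted E K (u + p) (v + p) = shifted E K u v" for u v
  proof -
    have "E (u + K + p) (v + K + p) = E (u + K) (v + K)"
      using periodic unfolding eventually_periodic_def by simp
    then show ?thesis unfolding shifted_def by (simp add: ac_simps)
  qed
  show "shifted E K u (v + p) = shifted E K u v" if "u + K \<le> v" for u v
  proof -
    have "E (u + K) (v + K + p) = E (u + K) (v + K)"
      using periodic that unfolding eventually_periodic_def by simp
    then show ?thesis unfolding shifted_def by (simp add: ac_simps)
  qed
qed

definition period :: nat where "period = high.loop_factor * p"

definition threshold :: nat where "threshold = 3 * K + 2 * high.diam_bound + period + 1"

lemma high_path_shift:
  assumes "threshold \<le> u" "s < K"
  shows "high_path E K (u + period) s \<longleftrightarrow> high_path E K u s"
proof -
  have "E (w + high.loop_factor * p + K) s = E (w + K) s" if "K \<le> w" for w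
    using eventually_periodic_mult_fst[OF periodic, of s "w + K" high.loop_factor] that assms(2)
    by (simp add: ac_simps)
  moreover have "high.diam_bound + K + K + high.loop_factor * p \<le> u - K"
    using assms(1) unfolding threshold_def period_def by linarith
  ultimately have "(\<exists>w. (shifted E K)\<^sup>*\<^sup>* (u - K + high.loop_factor * p) w \<and> E (w + K) s) \<longleftrightarrow>
             (\<exists>w. (shifted E K)\<^sup>*\<^sup>* (u - K) w \<and> E (w + K) s)"
    by (rule high.ex_reach_shift_iff)
  moreover have "u - K + high.loop_factor * p = u + period - K"
    using assms(1) by (simp add: threshold_def period_def)
  ultimately show ?thesis using assms by (auto simp: high_path_def threshold_def)
qed

lemma rtranclp_shift_iff:
  assumes "threshold \<le> u" "threshold \<le> v"
  shows "E\<^sup>*\<^sup>* (u + period) (v + period) \<longleftrightarrow> E\<^sup>*\<^sup>* u v"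
proof -
  have "(shifted E K)\<^sup>*\<^sup>* (u - K + high.loop_factor * p) (v - K + high.loop_factor * p) \<longleftrightarrow>
        (shifted E K)\<^sup>*\<^sup>* (u - K) (v - K)"
    by (rule high.reach_shift_iff) (use assms in \<open>simp_all add: threshold_def period_def\<close>)
  moreover have "u - K + high.loop_factor * p = u + period - K" "v - K + high.loop_factor * p = v + period - K"
    using assms by (simp_all add: threshold_def period_def)
  moreover have "K \<le> u" "K \<le> v" using assms by (simp_all add: threshold_def)
  ultimately show ?thesis
    unfolding rtranclp_iff_split_reach[OF symp_E, where K = K and u = "u + period" and v = "v + period"]
      rtranclp_iff_split_reach[OF symp_E, where K = K and u = u and v = v] split_reach_def
    using high_path_shift[OF assms(1)] high_path_shift[OF assms(2)] by auto
qed

lemma rtranclp_shift_far_iff: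
  assumes "u + threshold \<le> v"
  shows "E\<^sup>*\<^sup>* u (v + period) \<longleftrightarrow> E\<^sup>*\<^sup>* u v"
proof -
  have "threshold \<le> v" using assms by simp
  have "(K \<le> u \<and> K \<le> v + period \<and> (shifted E K)\<^sup>*\<^sup>* (u - K) (v + period - K)) \<longleftrightarrow>
        (K \<le> u \<and> K \<le> v \<and> (shifted E K)\<^sup>*\<^sup>* (u - K) (v - K))"
  proof (cases "K \<le> u")
    case True
    have "(shifted E K)\<^sup>*\<^sup>* (u - K) (v - K + high.loop_factor * p) \<longleftrightarrow> (shifted E K)\<^sup>*\<^sup>* (u - K) (v - K)"
      by (rule high.reach_far_shift_iff) (use assms True in \<open>simp_all add: threshold_def period_def\<close>)
    moreover have "v - K + high.loop_factor * p = v + period - K"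
      using assms by (simp add: threshold_def period_def)
    ultimately show ?thesis using assms by (simp add: threshold_def)
  qed simp
  then show ?thesis
    unfolding rtranclp_iff_split_reach[OF symp_E, where K = K and u = u and v = "v + period"]
      rtranclp_iff_split_reach[OF symp_E, where K = K and u = u and v = v] split_reach_def
    using high_path_shift[OF \<open>threshold \<le> v\<close>] by auto
qed

lemma eventually_periodic_rtranclp: "eventually_periodic threshold period E\<^sup>*\<^sup>*"
  unfolding eventually_periodic_def
proof (intro conjI allI impI)
  show "0 < period" using high.loop_factor(1) high.period_pos by (simp add: period_def)
  show "E\<^sup>*\<^sup>* m (n + period) = E\<^sup>*\<^sup>* m n" if "m + threshold \<le> n" for m n
    using rtranclp_shift_far_iff[OF that] by simp
  show "E\<^sup>*\<^sup>* (m + period) n = E\<^sup>*\<^sup>* m n" if "n + threshold \<le> m" for m n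
    using rtranclp_shift_far_iff[OF that] sympD[OF symp_rtranclp[OF symp_E]] by blast
qed (simp add: rtranclp_shift_iff)

end

lemma eventually_periodic_equivclp:
  assumes "eventually_periodic K p X"
  shows "\<exists>K' p'. eventually_periodic K' p' (equivclp X)"
proof -
  interpret symmetric_eventually_periodic "symclp X" K p
    using assms by unfold_locales (simp_all add: eventually_periodic_symclp)
  show ?thesis using eventually_periodic_rtranclp unfolding equivclp_def by blast
qed

lemma rtrancl_pullback_inj:
  assumes "inj f" "M \<subseteq> range f \<times> range f"
  shows "(f a, f b) \<in> M\<^sup>* \<longleftrightarrow> (\<lambda>x y. (f x, f y) \<in> M)\<^sup>*\<^sup>* a b"
proof
  have "(f a, c) \<in> M\<^sup>* \<Longrightarrow> c = f b \<Longrightarrow> (\<lambda>x y. (f x, f y) \<in> M)\<^sup>*\<^sup>* a b" for c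
  proof (induction arbitrary: b rule: rtrancl_induct)
    case base
    then show ?case using injD[OF assms(1), of a b] by simp
  next
    case (step y z)
    then obtain k where "y = f k" using assms(2) by blast
    then show ?case using step.IH[of k] step.hyps(2) step.prems by (simp add: rtranclp.rtrancl_into_rtrancl)
  qed
  then show "(f a, f b) \<in> M\<^sup>* \<Longrightarrow> (\<lambda>x y. (f x, f y) \<in> M)\<^sup>*\<^sup>* a b" by blast
next
  show "(\<lambda>x y. (f x, f y) \<in> M)\<^sup>*\<^sup>* a b \<Longrightarrow> (f a, f b) \<in> M\<^sup>*"
    by (induction rule: rtranclp_induct) (auto intro: rtrancl_into_rtrancl)
qed

lemma equivalence_closure_pullback_inj:
  assumes "inj f" "range f = S" "M \<subseteq> S \<times> S"
  shows "(f a, f b) \<in> Id_on S \<union> (M \<union> M\<inverse>)\<^sup>+ \<longleftrightarrow> equivclp (\<lambda>x y. (f x, f y) \<in> M) a b"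
proof -
  have "(f a, f b) \<in> Id_on S \<union> (M \<union> M\<inverse>)\<^sup>+ \<longleftrightarrow> (f a, f b) \<in> (M \<union> M\<inverse>)\<^sup>*"
    using assms(2) by (auto simp: rtrancl_eq_or_trancl)
  also have "\<dots> \<longleftrightarrow> (\<lambda>x y. (f x, f y) \<in> M \<union> M\<inverse>)\<^sup>*\<^sup>* a b"
    by (rule rtrancl_pullback_inj) (use assms in blast)+
  also have "(\<lambda>x y. (f x, f y) \<in> M \<union> M\<inverse>) = symclp (\<lambda>x y. (f x, f y) \<in> M)"
    by (auto simp: symclp_def fun_eq_iff)
  finally show ?thesis by (simp add: equivclp_def)
qed


theorem corollary4p7:
  fixes S :: "'s set" and rels :: "(nat \<times> 's list set) list"
    and \<phi> :: "unit list \<Rightarrow> 's" and R :: "'s list set"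
  assumes "relational_structure S rels"
    and "FA_presentation UNIV \<phi> S rels" and "inj \<phi>"
    and "(2, R) \<in> set rels"
  defines "Rp \<equiv> {(x, y). [x, y] \<in> R}"
  defines "Q \<equiv> Id_on S \<union> (Rp \<union> Rp\<inverse>)\<^sup>+"
  shows "regular_rel (Lambda UNIV \<phi> 2 {[x, y] | x y. (x, y) \<in> Q})
         \<and> unary_FA_presentable S (rels @ [(2, {[x, y] | x y. (x, y) \<in> Q})])"
proof -
  define \<psi> where "\<psi> m = \<phi> (replicate m ())" for m
  have "inj \<psi>"
  proof (rule injI)
    fix m n assume "\<psi> m = \<psi> n"
    then have "replicate m () = replicate n ()" unfolding \<psi>_def by (rule injD[OF \<open>inj \<phi>\<close>])
    then show "m = n" by simp
  qed
  have "range \<psi> = range \<phi>"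
    unfolding \<psi>_def by (metis image_image surjI unit_list_eq_replicate)
  then have "range \<psi> = S" using assms(2) by (simp add: FA_presentation_def)
  have "Rp \<subseteq> S \<times> S" using assms(1,4) by (fastforce simp: relational_structure_def Rp_def)
  have "regular_rel (Lambda UNIV \<phi> 2 R)" using assms(2,4) by (auto simp: FA_presentation_def)
  then obtain K p where "eventually_periodic K p (\<lambda>m n. (\<psi> m, \<psi> n) \<in> Rp)"
    unfolding regular_rel_unary_iff_eventually_periodic by (auto simp: \<psi>_def Rp_def)
  then obtain K' p' where "eventually_periodic K' p' (\<lambda>m n. (\<psi> m, \<psi> n) \<in> Q)"
    using eventually_periodic_equivclp
    unfolding Q_def equivalence_closure_pullback_inj[OF \<open>inj \<psi>\<close> \<open>range \<psi> = S\<close> \<open>Rp \<subseteq> S \<times> S\<close>] by blast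
  then have "regular_rel (Lambda UNIV \<phi> 2 {[x, y] | x y. (x, y) \<in> Q})"
    unfolding regular_rel_unary_iff_eventually_periodic by (auto simp: \<psi>_def)
  moreover from this have "FA_presentation UNIV \<phi> S (rels @ [(2, {[x, y] | x y. (x, y) \<in> Q})])"
    using assms(2) by (auto simp: FA_presentation_def)
  ultimately show ?thesis unfolding unary_FA_presentable_def by blast
qed

end
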